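(* Let $\langle A,\to\rangle$ be a conditional algebra. For $a\in A$ let $Q_a$, $[Q_a]$ be defined as in the context, and for $U,V\subseteq\mathrm{Ul}(A)$ let $\Box_U(V)=U\to_{T_A}V$. Then: (1) for every $a\in A$, $[Q_a]=\Box_{\varphi(a)}$; (2) for all $U,V\subseteq\mathrm{Ul}(A)$, $$\Box_U(V)=\bigcap_{(Y,O)}\ \bigcup_{\substack{a\in F_Y,\ b\in I_O}}\Box_{\varphi(a)}(\varphi(b))=\bigcap_{(Y,O)}\ \bigcup_{a\in F_Y}[Q_a](O),$$ where $(Y,O)$ ranges over pairs with $Y\subseteq U$ closed and $O\supseteq V$ open in the Stone space of $A$, $F_Y=\{a\in A: Y\subseteq\varphi(a)\}$ and $I_O=\{b\in A:\varphi(b)\subseteq O\}$.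
   Context: A conditional algebra is a pair $\langle A,\to\rangle$ where $A$ is a Boolean algebra and $\to$ is a binary operation with, for all $a,b,c$: $a\to 1=1$; $(a\to b)\wedge(a\to c)=a\to(b\wedge c)$; $(a\vee b)\to c\le (a\to c)\wedge(b\to c)$. $\mathrm{Ul}(A)$ is the Stone space of ultrafilters, $\varphi(a)=\{u:a\in u\}$; filters include the improper filter $A$, and $\varphi(F)=\{u:F\subseteq u\}$. $D^{\to}_X(Y)=\{b:\exists a\in Y,\ a\to b\in X\}$. $T_A(u,Z,v)$ iff there is a filter $F$ with $Z=\varphi(F)$ and $D^{\to}_u(F)\subseteq v$; $T_A(u,Z)=\{v:T_A(u,Z,v)\}$; $U\to_{T_A}V=\{u:\forall Z\subseteq U,\ T_A(u,Z)\subseteq V\}$. For $a\in A$: $Q_a(u,v)$ iff $\{b\in A: a\to b\in u\}\subseteq v$; $Q_a(u)=\{v:Q_a(u,v)\}$; $[Q_a](X)=\{u:Q_a(u)\subseteq X\}$ for $X\subseteq\mathrm{Ul}(A)$. *)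

theory Defs
  imports Main
begin

definition cond_alg :: "('a::boolean_algebra \<Rightarrow> 'a \<Rightarrow> 'a) \<Rightarrow> bool" where
  "cond_alg imp \<longleftrightarrow>
     (\<forall>a. imp a top = top) \<and>
     (\<forall>a b c. inf (imp a b) (imp a c) = imp a (inf b c)) \<and>
     (\<forall>a b c. imp (sup a b) c \<le> inf (imp a c) (imp b c))"

text \<open>Filters (the improper filter UNIV included).\<close>
definition is_filter :: "'a::boolean_algebra set \<Rightarrow> bool" where
  "is_filter F \<longleftrightarrow> top \<in> F \<and> (\<forall>a\<in>F. \<forall>b\<in>F. inf a b \<in> F) \<and>
     (\<forall>a b. a \<in> F \<longrightarrow> a \<le> b \<longrightarrow> b \<in> F)"

definition ultrafilter :: "'a::boolean_algebra set \<Rightarrow> bool" where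
  "ultrafilter u \<longleftrightarrow> is_filter u \<and> bot \<notin> u \<and>
     (\<forall>G. is_filter G \<and> bot \<notin> G \<and> u \<subseteq> G \<longrightarrow> G = u)"

definition Ul :: "'a::boolean_algebra set set" where
  "Ul = {u. ultrafilter u}"

definition phi :: "'a::boolean_algebra \<Rightarrow> 'a set set" where
  "phi a = {u \<in> Ul. a \<in> u}"

definition phiF :: "'a::boolean_algebra set \<Rightarrow> 'a set set" where
  "phiF F = {u \<in> Ul. F \<subseteq> u}"

definition stone_open :: "'a::boolean_algebra set set \<Rightarrow> bool" where
  "stone_open W \<longleftrightarrow> W \<subseteq> Ul \<and> (\<forall>u\<in>W. \<exists>b. u \<in> phi b \<and> phi b \<subseteq> W)"

definition stone_closed :: "'a::boolean_algebra set set \<Rightarrow> bool" where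
  "stone_closed Y \<longleftrightarrow> Y \<subseteq> Ul \<and> stone_open (Ul - Y)"

definition Dimp :: "('a::boolean_algebra \<Rightarrow> 'a \<Rightarrow> 'a) \<Rightarrow> 'a set \<Rightarrow> 'a set \<Rightarrow> 'a set" where
  "Dimp imp X Y = {b. \<exists>a\<in>Y. imp a b \<in> X}"

definition TA :: "('a::boolean_algebra \<Rightarrow> 'a \<Rightarrow> 'a) \<Rightarrow> 'a set \<Rightarrow> 'a set set \<Rightarrow> 'a set \<Rightarrow> bool" where
  "TA imp u Z v \<longleftrightarrow> (\<exists>F. is_filter F \<and> Z = phiF F \<and> Dimp imp u F \<subseteq> v)"

definition TAset :: "('a::boolean_algebra \<Rightarrow> 'a \<Rightarrow> 'a) \<Rightarrow> 'a set \<Rightarrow> 'a set set \<Rightarrow> 'a set set" where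
  "TAset imp u Z = {v \<in> Ul. TA imp u Z v}"

definition arrT :: "('a::boolean_algebra \<Rightarrow> 'a \<Rightarrow> 'a) \<Rightarrow> 'a set set \<Rightarrow> 'a set set \<Rightarrow> 'a set set" where
  "arrT imp U V = {u \<in> Ul. \<forall>Z. Z \<subseteq> U \<longrightarrow> TAset imp u Z \<subseteq> V}"

definition Box :: "('a::boolean_algebra \<Rightarrow> 'a \<Rightarrow> 'a) \<Rightarrow> 'a set set \<Rightarrow> 'a set set \<Rightarrow> 'a set set" where
  "Box imp U V = arrT imp U V"

definition Qrel :: "('a::boolean_algebra \<Rightarrow> 'a \<Rightarrow> 'a) \<Rightarrow> 'a \<Rightarrow> 'a set \<Rightarrow> 'a set \<Rightarrow> bool" where
  "Qrel imp a u v \<longleftrightarrow> {b. imp a b \<in> u} \<subseteq> v"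

definition Qset :: "('a::boolean_algebra \<Rightarrow> 'a \<Rightarrow> 'a) \<Rightarrow> 'a \<Rightarrow> 'a set \<Rightarrow> 'a set set" where
  "Qset imp a u = {v \<in> Ul. Qrel imp a u v}"

definition boxQ :: "('a::boolean_algebra \<Rightarrow> 'a \<Rightarrow> 'a) \<Rightarrow> 'a \<Rightarrow> 'a set set \<Rightarrow> 'a set set" where
  "boxQ imp a X = {u \<in> Ul. Qset imp a u \<subseteq> X}"

definition FY :: "'a::boolean_algebra set set \<Rightarrow> 'a set" where
  "FY Y = {a. Y \<subseteq> phi a}"

definition IO :: "'a::boolean_algebra set set \<Rightarrow> 'a set" where
  "IO W = {b. phi b \<subseteq> W}"

definition pairs :: "'a::boolean_algebra set set \<Rightarrow> 'a set set \<Rightarrow> ('a set set \<times> 'a set set) set" where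
  "pairs U V = {(Y, W). stone_closed Y \<and> Y \<subseteq> U \<and> stone_open W \<and> V \<subseteq> W}"

end

theory Submission
  imports Defs
begin

text \<open>Closed subsets Y of the Stone space are exactly the sets phiF F of filters F, the largest
such filter being F_Y.  If Z = phiF F lies inside phi a then a \<in> F, so every T_A-successor of u
along Z is a Q_a-successor; conversely the principal filter of a realises every Q_a-successor
along phi a.  For u \<in> Box_U(V) and a pair (Y, O), the closed set
phiF (D_u(F_Y)) lies in V \<subseteq> O, so by compactness a single d \<in> D_u(F_Y), i.e. some a \<in> F_Y with
a \<rightarrow> d \<in> u, already has phi d \<subseteq> O.  Finally, a successor v \<notin> V of u along Z \<subseteq> U is ruled out by
the pair (Z, Ul - {v}).\<close>

lemma is_filterI:
  assumes "top \<in> F" "\<And>a b. a \<in> F \<Longrightarrow> b \<in> F \<Longrightarrow> inf a b \<in> F"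
    "\<And>a b. a \<in> F \<Longrightarrow> a \<le> b \<Longrightarrow> b \<in> F"
  shows "is_filter F"
  using assms unfolding is_filter_def by blast

lemma filter_top: "is_filter F \<Longrightarrow> top \<in> F"
  and filter_inf: "is_filter F \<Longrightarrow> a \<in> F \<Longrightarrow> b \<in> F \<Longrightarrow> inf a b \<in> F"
  and filter_up: "is_filter F \<Longrightarrow> a \<in> F \<Longrightarrow> a \<le> b \<Longrightarrow> b \<in> F"
  unfolding is_filter_def by blast+

definition principal_filter :: "'a::order \<Rightarrow> 'a set" where
  "principal_filter a = {b. a \<le> b}"

lemma is_filter_principal_filter: "is_filter (principal_filter a)"
  unfolding is_filter_def principal_filter_def by auto

lemma principal_filter_self: "a \<in> principal_filter a"
  by (simp add: principal_filter_def)

definition filter_join :: "'a::boolean_algebra set \<Rightarrow> 'a set \<Rightarrow> 'a set" where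
  "filter_join F G = {c. \<exists>f\<in>F. \<exists>g\<in>G. inf f g \<le> c}"

lemma is_filter_filter_join:
  assumes F: "is_filter F" and G: "is_filter G"
  shows "is_filter (filter_join F G)"
proof (rule is_filterI)
  show "top \<in> filter_join F G"
    using filter_top[OF F] filter_top[OF G] unfolding filter_join_def by force
next
  fix a b assume "a \<in> filter_join F G" "b \<in> filter_join F G"
  then obtain f1 g1 f2 g2 where "f1 \<in> F" "g1 \<in> G" "inf f1 g1 \<le> a"
    and "f2 \<in> F" "g2 \<in> G" "inf f2 g2 \<le> b"
    unfolding filter_join_def by blast
  moreover from this have "inf (inf f1 f2) (inf g1 g2) \<le> inf a b"
    by (meson inf_le1 inf_le2 le_inf_iff order_trans)
  ultimately show "inf a b \<in> filter_join F G"
    using filter_inf F G unfolding filter_join_def by blast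
next
  fix a b assume "a \<in> filter_join F G" "a \<le> b"
  then show "b \<in> filter_join F G"
    unfolding filter_join_def by (blast intro: order_trans)
qed

lemma filter_join_upper1: "is_filter F \<Longrightarrow> is_filter G \<Longrightarrow> F \<subseteq> filter_join F G"
  unfolding filter_join_def by (force dest: filter_top)

lemma filter_join_upper2: "is_filter F \<Longrightarrow> is_filter G \<Longrightarrow> G \<subseteq> filter_join F G"
  unfolding filter_join_def by (force dest: filter_top)

lemma bot_mem_filter_join_iff:
  "bot \<in> filter_join F G \<longleftrightarrow> (\<exists>f\<in>F. \<exists>g\<in>G. inf f g = bot)"
  unfolding filter_join_def by (auto simp: bot_unique)

lemma bot_notin_filter_join_principal_filter:
  assumes "is_filter F" "- a \<notin> F"
  shows "bot \<notin> filter_join F (principal_filter a)"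
proof
  assume "bot \<in> filter_join F (principal_filter a)"
  then obtain f g where "f \<in> F" "a \<le> g" "inf f g = bot"
    unfolding bot_mem_filter_join_iff principal_filter_def by blast
  then have "inf f a = bot"
    using inf_mono[OF order_refl, of a g f] by (simp add: bot_unique)
  then have "f \<le> - a"
    by (simp add: inf_shunt)
  with assms \<open>f \<in> F\<close> show False
    using filter_up by blast
qed

lemma is_filter_Union_chain:
  assumes "C \<noteq> {}" "\<And>F. F \<in> C \<Longrightarrow> is_filter F"
    and chain: "\<And>F G. F \<in> C \<Longrightarrow> G \<in> C \<Longrightarrow> F \<subseteq> G \<or> G \<subseteq> F"
  shows "is_filter (\<Union>C)"
proof (rule is_filterI)
  show "top \<in> \<Union>C" using assms(1,2) filter_top by blast
next
  fix a b assume "a \<in> \<Union>C" "b \<in> \<Union>C"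
  then obtain F G where "F \<in> C" "G \<in> C" "a \<in> F" "b \<in> G" by blast
  with chain[of F G] show "inf a b \<in> \<Union>C"
    using assms(2) filter_inf by blast
next
  fix a b assume "a \<in> \<Union>C" "a \<le> b"
  then show "b \<in> \<Union>C" using assms(2) filter_up by blast
qed

lemma ultrafilter_extend:
  assumes "is_filter F" "bot \<notin> F"
  obtains u where "ultrafilter u" "F \<subseteq> u"
proof -
  let ?P = "{G. is_filter G \<and> bot \<notin> G \<and> F \<subseteq> G}"
  have "\<exists>M\<in>?P. \<forall>G\<in>?P. M \<subseteq> G \<longrightarrow> G = M"
  proof (rule subset_Zorn_nonempty)
    show "?P \<noteq> {}" using assms by blast
  next
    fix C assume "C \<noteq> {}" "subset.chain ?P C"
    then show "\<Union>C \<in> ?P"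
      using is_filter_Union_chain[of C] unfolding subset_chain_def by blast
  qed
  then obtain M where "M \<in> ?P" "\<forall>G\<in>?P. M \<subseteq> G \<longrightarrow> G = M" by blast
  then have "ultrafilter M" "F \<subseteq> M"
    unfolding ultrafilter_def by blast+
  then show thesis by (rule that)
qed

lemma ultrafilter_is_filter: "ultrafilter u \<Longrightarrow> is_filter u"
  and ultrafilter_bot: "ultrafilter u \<Longrightarrow> bot \<notin> u"
  by (simp_all add: ultrafilter_def)

lemma ultrafilter_maximal:
  "ultrafilter u \<Longrightarrow> is_filter G \<Longrightarrow> bot \<notin> G \<Longrightarrow> u \<subseteq> G \<Longrightarrow> G = u"
  unfolding ultrafilter_def by blast

lemma ultrafilter_compl_iff:
  assumes u: "ultrafilter u"
  shows "- a \<in> u \<longleftrightarrow> a \<notin> u"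
proof
  assume "- a \<in> u"
  then have "a \<in> u \<Longrightarrow> bot \<in> u"
    using filter_inf[OF ultrafilter_is_filter[OF u]] by fastforce
  with u show "a \<notin> u" by (auto simp: ultrafilter_bot)
next
  let ?G = "filter_join u (principal_filter a)"
  assume "a \<notin> u"
  show "- a \<in> u"
  proof (rule ccontr)
    assume "- a \<notin> u"
    then have "?G = u"
      using ultrafilter_is_filter[OF u] is_filter_principal_filter
      by (intro ultrafilter_maximal[OF u] is_filter_filter_join
          bot_notin_filter_join_principal_filter filter_join_upper1)
    moreover have "a \<in> ?G"
      using filter_join_upper2[OF ultrafilter_is_filter[OF u] is_filter_principal_filter]
        principal_filter_self by blast
    ultimately show False using \<open>a \<notin> u\<close> by blast
  qed
qed

lemma ultrafilter_separate:
  assumes F: "is_filter F" and a: "a \<notin> F"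
  obtains u where "ultrafilter u" "F \<subseteq> u" "a \<notin> u"
proof -
  let ?G = "filter_join F (principal_filter (- a))"
  have "is_filter ?G" "bot \<notin> ?G"
    using is_filter_filter_join[OF F is_filter_principal_filter]
      bot_notin_filter_join_principal_filter[OF F, of "- a"] a by simp_all
  then obtain u where u: "ultrafilter u" "?G \<subseteq> u"
    by (rule ultrafilter_extend)
  moreover have "F \<subseteq> u" "- a \<in> u"
    using u(2) filter_join_upper1[OF F is_filter_principal_filter]
      filter_join_upper2[OF F is_filter_principal_filter] principal_filter_self
    by blast+
  ultimately show thesis
    using that ultrafilter_compl_iff by blast
qed

lemma phiF_subset_phi_iff:
  assumes "is_filter F"
  shows "phiF F \<subseteq> phi a \<longleftrightarrow> a \<in> F"
  using assms ultrafilter_separate[OF assms, of a] unfolding phiF_def Ul_def phi_def by auto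

lemma phiF_principal_filter: "phiF (principal_filter a) = phi a"
  unfolding phiF_def Ul_def phi_def principal_filter_def
  by (auto intro: filter_up ultrafilter_is_filter)

lemma disjoint_phiF_imp_inf_bot:
  assumes F: "is_filter F" and G: "is_filter G" and disj: "phiF F \<inter> phiF G = {}"
  shows "\<exists>f\<in>F. \<exists>g\<in>G. inf f g = bot"
proof (rule ccontr)
  assume "\<not> ?thesis"
  then have "bot \<notin> filter_join F G"
    by (simp add: bot_mem_filter_join_iff)
  then obtain u where "ultrafilter u" "filter_join F G \<subseteq> u"
    using ultrafilter_extend is_filter_filter_join[OF F G] by blast
  then have "u \<in> phiF F \<inter> phiF G"
    using filter_join_upper1[OF F G] filter_join_upper2[OF F G]
    unfolding phiF_def Ul_def by auto
  with disj show False by blast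
qed

lemma is_filter_Inter: "(\<And>F. F \<in> \<F> \<Longrightarrow> is_filter F) \<Longrightarrow> is_filter (\<Inter>\<F>)"
  by (rule is_filterI) (auto intro: filter_top filter_inf filter_up)

lemma FY_eq_Inter: "Y \<subseteq> Ul \<Longrightarrow> FY Y = \<Inter>Y"
  unfolding FY_def phi_def Ul_def by auto

lemma is_filter_FY: "Y \<subseteq> Ul \<Longrightarrow> is_filter (FY Y)"
  unfolding FY_eq_Inter by (rule is_filter_Inter) (auto simp: Ul_def ultrafilter_is_filter)

lemma stone_closed_phiF:
  assumes F: "is_filter F"
  shows "stone_closed (phiF F)"
  unfolding stone_closed_def stone_open_def
proof (intro conjI ballI)
  fix w assume w: "w \<in> Ul - phiF F"
  then obtain f where "f \<in> F" "f \<notin> w" unfolding phiF_def Ul_def by auto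
  with w have "w \<in> phi (- f)" "phi (- f) \<subseteq> Ul - phiF F"
    unfolding phi_def Ul_def phiF_def by (auto simp: ultrafilter_compl_iff)
  then show "\<exists>b. w \<in> phi b \<and> phi b \<subseteq> Ul - phiF F" by blast
qed (auto simp: phiF_def)

lemma phiF_FY:
  assumes Y: "stone_closed Y"
  shows "phiF (FY Y) = Y"
proof
  have YUl: "Y \<subseteq> Ul" using Y by (simp add: stone_closed_def)
  then show "Y \<subseteq> phiF (FY Y)"
    unfolding phiF_def Ul_def FY_def phi_def by blast
  show "phiF (FY Y) \<subseteq> Y"
  proof
    fix v assume v: "v \<in> phiF (FY Y)"
    show "v \<in> Y"
    proof (rule ccontr)
      assume "v \<notin> Y"
      with v Y obtain c where c: "v \<in> phi c" "phi c \<subseteq> Ul - Y"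
        unfolding stone_closed_def stone_open_def phiF_def Ul_def by blast
      have "Y \<subseteq> phi (- c)"
      proof
        fix w assume "w \<in> Y"
        with YUl c have "ultrafilter w" "c \<notin> w" unfolding phi_def Ul_def by auto
        then show "w \<in> phi (- c)" unfolding phi_def Ul_def by (simp add: ultrafilter_compl_iff)
      qed
      with v have "- c \<in> v"
        unfolding phiF_def Ul_def FY_def by blast
      with c show False
        unfolding phi_def Ul_def by (auto simp: ultrafilter_compl_iff)
    qed
  qed
qed

lemma stone_closed_Diff_open: "stone_open W \<Longrightarrow> stone_closed (Ul - W)"
  unfolding stone_closed_def stone_open_def by (simp add: double_diff)

lemma stone_open_Ul: "stone_open Ul"
  unfolding stone_open_def phi_def Ul_def
  by (auto intro!: exI[of _ top] filter_top ultrafilter_is_filter)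

lemma stone_closed_empty: "stone_closed {}"
  by (simp add: stone_closed_def stone_open_Ul)

lemma stone_open_Ul_minus_point:
  assumes v: "v \<in> Ul"
  shows "stone_open (Ul - {v})"
  unfolding stone_open_def
proof (intro conjI ballI)
  fix w assume w: "w \<in> Ul - {v}"
  have "\<not> w \<subseteq> v"
    using w v ultrafilter_maximal[of w v]
    by (auto simp: Ul_def ultrafilter_is_filter ultrafilter_bot)
  then obtain b where "b \<in> w" "b \<notin> v" by blast
  with w show "\<exists>b. w \<in> phi b \<and> phi b \<subseteq> Ul - {v}"
    unfolding phi_def Ul_def by blast
qed blast

lemma phiF_subset_open_imp_phi_subset:
  assumes D: "is_filter D" and W: "stone_open W" and DW: "phiF D \<subseteq> W"
  shows "\<exists>d\<in>D. phi d \<subseteq> W"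
proof -
  let ?G = "FY (Ul - W)"
  have G: "is_filter ?G" and GW: "phiF ?G = Ul - W"
    using is_filter_FY phiF_FY stone_closed_Diff_open[OF W] by auto
  with DW have "phiF D \<inter> phiF ?G = {}" by blast
  then obtain d g where "d \<in> D" "g \<in> ?G" "inf d g = bot"
    using disjoint_phiF_imp_inf_bot[OF D G] by blast
  moreover have "phi d \<subseteq> W"
  proof
    fix w assume w: "w \<in> phi d"
    show "w \<in> W"
    proof (rule ccontr)
      assume "w \<notin> W"
      with w \<open>g \<in> ?G\<close> have "d \<in> w" "g \<in> w"
        unfolding FY_def phi_def Ul_def by auto
      with w \<open>inf d g = bot\<close> show False
        unfolding phi_def Ul_def using filter_inf ultrafilter_is_filter ultrafilter_bot by fastforce
    qed
  qed
  ultimately show ?thesis by blast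
qed

lemma cond_alg_imp_top: "cond_alg imp \<Longrightarrow> imp a top = top"
  and cond_alg_imp_inf: "cond_alg imp \<Longrightarrow> inf (imp a b) (imp a c) = imp a (inf b c)"
  and cond_alg_imp_sup: "cond_alg imp \<Longrightarrow> imp (sup a b) c \<le> inf (imp a c) (imp b c)"
  unfolding cond_alg_def by blast+

lemma cond_alg_imp_mono:
  assumes "cond_alg imp" "b \<le> c"
  shows "imp a b \<le> imp a c"
  using cond_alg_imp_inf[OF assms(1), of a b c] assms(2)
  by (metis inf.absorb1 inf.orderI inf_commute)

lemma cond_alg_imp_antimono:
  assumes "cond_alg imp" "a \<le> a'"
  shows "imp a' c \<le> imp a c"
  using cond_alg_imp_sup[OF assms(1), of a a' c] assms(2)
  by (simp add: sup_absorb2)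

lemma is_filter_Dimp:
  assumes C: "cond_alg imp" and u: "is_filter u" and F: "is_filter F"
  shows "is_filter (Dimp imp u F)"
proof (rule is_filterI)
  show "top \<in> Dimp imp u F"
    unfolding Dimp_def using cond_alg_imp_top[OF C] filter_top[OF u] filter_top[OF F] by auto
next
  fix b1 b2 assume "b1 \<in> Dimp imp u F" "b2 \<in> Dimp imp u F"
  then obtain a1 a2 where a: "a1 \<in> F" "imp a1 b1 \<in> u" "a2 \<in> F" "imp a2 b2 \<in> u"
    unfolding Dimp_def by blast
  let ?a = "inf a1 a2"
  have "imp ?a b1 \<in> u" "imp ?a b2 \<in> u"
    using a filter_up[OF u] cond_alg_imp_antimono[OF C] by (meson inf_le1 inf_le2)+
  then have "imp ?a (inf b1 b2) \<in> u"
    using filter_inf[OF u] cond_alg_imp_inf[OF C] by metis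
  moreover have "?a \<in> F" using a filter_inf[OF F] by blast
  ultimately show "inf b1 b2 \<in> Dimp imp u F"
    unfolding Dimp_def by blast
next
  fix b c assume "b \<in> Dimp imp u F" "b \<le> c"
  then show "c \<in> Dimp imp u F"
    unfolding Dimp_def using filter_up[OF u] cond_alg_imp_mono[OF C] by blast
qed

lemma mem_Box_iff: "u \<in> Box imp U V \<longleftrightarrow> u \<in> Ul \<and> (\<forall>Z\<subseteq>U. TAset imp u Z \<subseteq> V)"
  by (simp add: Box_def arrT_def)

lemma stone_closed_if_mem_TAset: "v \<in> TAset imp u Z \<Longrightarrow> stone_closed Z"
  unfolding TAset_def TA_def using stone_closed_phiF by blast

lemma phiF_Dimp_subset_TAset: "is_filter F \<Longrightarrow> phiF (Dimp imp u F) \<subseteq> TAset imp u (phiF F)"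
  unfolding TAset_def TA_def phiF_def by blast

lemma TAset_subset_Qset: "Z \<subseteq> phi a \<Longrightarrow> TAset imp u Z \<subseteq> Qset imp a u"
  unfolding TAset_def TA_def Qset_def Qrel_def Dimp_def
  using phiF_subset_phi_iff by blast

lemma Qset_subset_TAset_phi:
  assumes C: "cond_alg imp" and u: "is_filter u"
  shows "Qset imp a u \<subseteq> TAset imp u (phi a)"
proof -
  have "Dimp imp u (principal_filter a) \<subseteq> {b. imp a b \<in> u}"
    unfolding Dimp_def principal_filter_def
    using filter_up[OF u] cond_alg_imp_antimono[OF C] by blast
  then have "Qset imp a u \<subseteq> phiF (Dimp imp u (principal_filter a))"
    unfolding Qset_def Qrel_def phiF_def by blast
  also have "\<dots> \<subseteq> TAset imp u (phi a)"
    using phiF_Dimp_subset_TAset[OF is_filter_principal_filter]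
    by (simp add: phiF_principal_filter)
  finally show ?thesis .
qed

lemma Qset_subset_phi: "imp a b \<in> u \<Longrightarrow> Qset imp a u \<subseteq> phi b"
  unfolding Qset_def Qrel_def phi_def by blast

lemma boxQ_mono: "X \<subseteq> X' \<Longrightarrow> boxQ imp a X \<subseteq> boxQ imp a X'"
  unfolding boxQ_def by blast

lemma boxQ_eq_Box_phi:
  assumes C: "cond_alg imp"
  shows "boxQ imp a X = Box imp (phi a) X"
proof (intro set_eqI iffI)
  fix u assume "u \<in> boxQ imp a X"
  then show "u \<in> Box imp (phi a) X"
    unfolding boxQ_def mem_Box_iff using TAset_subset_Qset by blast
next
  fix u assume "u \<in> Box imp (phi a) X"
  then show "u \<in> boxQ imp a X"
    unfolding boxQ_def mem_Box_iff Ul_def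
    using Qset_subset_TAset_phi[OF C ultrafilter_is_filter] by blast
qed

lemma Box_subset_Inter_Box_phi:
  assumes C: "cond_alg imp"
  shows "Box imp U V \<subseteq> (\<Inter>(Y, W)\<in>pairs U V. \<Union>a\<in>FY Y. \<Union>b\<in>IO W. Box imp (phi a) (phi b))"
proof clarify
  fix u Y W assume u: "u \<in> Box imp U V" and YW: "(Y, W) \<in> pairs U V"
  then have Y: "stone_closed Y" "Y \<subseteq> U" and W: "stone_open W" "V \<subseteq> W"
    by (auto simp: pairs_def)
  have F: "is_filter (FY Y)" and phiF_F: "phiF (FY Y) = Y"
    using Y(1) is_filter_FY phiF_FY by (auto simp: stone_closed_def)
  have uUl: "u \<in> Ul" using u by (simp add: mem_Box_iff)
  then have "is_filter u" by (simp add: Ul_def ultrafilter_is_filter)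
  have "phiF (Dimp imp u (FY Y)) \<subseteq> TAset imp u Y"
    using phiF_Dimp_subset_TAset[OF F] phiF_F by metis
  also have "\<dots> \<subseteq> V"
    using u Y(2) by (simp add: mem_Box_iff)
  finally have "phiF (Dimp imp u (FY Y)) \<subseteq> W"
    using W(2) by blast
  then obtain d where d: "d \<in> Dimp imp u (FY Y)" "phi d \<subseteq> W"
    using phiF_subset_open_imp_phi_subset[OF is_filter_Dimp[OF C \<open>is_filter u\<close> F] W(1)]
    by blast
  then obtain a where a: "a \<in> FY Y" "imp a d \<in> u"
    unfolding Dimp_def by blast
  then have "u \<in> boxQ imp a (phi d)"
    using uUl Qset_subset_phi unfolding boxQ_def by blast
  then have "u \<in> Box imp (phi a) (phi d)"
    by (simp add: boxQ_eq_Box_phi[OF C])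
  with a(1) show "u \<in> (\<Union>a\<in>FY Y. \<Union>b\<in>IO W. Box imp (phi a) (phi b))"
    using d(2) unfolding IO_def by blast
qed

lemma Inter_Box_phi_subset_Inter_boxQ:
  assumes C: "cond_alg imp"
  shows "(\<Inter>(Y, W)\<in>pairs U V. \<Union>a\<in>FY Y. \<Union>b\<in>IO W. Box imp (phi a) (phi b))
    \<subseteq> (\<Inter>(Y, W)\<in>pairs U V. \<Union>a\<in>FY Y. boxQ imp a W)"
proof -
  have "Box imp (phi a) (phi b) \<subseteq> boxQ imp a W" if "b \<in> IO W" for a b W
  proof -
    have "Box imp (phi a) (phi b) = boxQ imp a (phi b)"
      by (simp add: boxQ_eq_Box_phi[OF C])
    also have "\<dots> \<subseteq> boxQ imp a W"
      using that by (intro boxQ_mono) (simp add: IO_def)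
    finally show ?thesis .
  qed
  then have "(\<Union>a\<in>FY Y. \<Union>b\<in>IO W. Box imp (phi a) (phi b)) \<subseteq> (\<Union>a\<in>FY Y. boxQ imp a W)"
    for Y W
    by (intro SUP_subset_mono order_refl UN_least)
  then show ?thesis
    by (intro INF_superset_mono order_refl) (auto split: prod.split)
qed

lemma Inter_boxQ_subset_Box:
  assumes V: "V \<subseteq> Ul"
  shows "(\<Inter>(Y, W)\<in>pairs U V. \<Union>a\<in>FY Y. boxQ imp a W) \<subseteq> Box imp U V"
proof
  fix u assume u: "u \<in> (\<Inter>(Y, W)\<in>pairs U V. \<Union>a\<in>FY Y. boxQ imp a W)"
  then have in_boxQ: "\<exists>a\<in>FY Y. u \<in> boxQ imp a W" if "(Y, W) \<in> pairs U V" for Y W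
    using that by blast
  have "({}, Ul) \<in> pairs U V"
    using V stone_closed_empty stone_open_Ul by (simp add: pairs_def)
  then have "u \<in> Ul"
    using in_boxQ unfolding boxQ_def by blast
  moreover have "v \<in> V" if Z: "Z \<subseteq> U" and v: "v \<in> TAset imp u Z" for Z v
  proof (rule ccontr)
    assume "v \<notin> V"
    moreover have "v \<in> Ul" using v by (simp add: TAset_def)
    ultimately have "(Z, Ul - {v}) \<in> pairs U V"
      using Z V stone_closed_if_mem_TAset[OF v] stone_open_Ul_minus_point
      by (auto simp: pairs_def)
    then obtain a where "Z \<subseteq> phi a" "Qset imp a u \<subseteq> Ul - {v}"
      using in_boxQ unfolding FY_def boxQ_def by blast
    with v show False
      using TAset_subset_Qset by blast
  qed
  ultimately show "u \<in> Box imp U V"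
    by (auto simp: mem_Box_iff)
qed

theorem theorem3p9:
  fixes imp :: "'a::boolean_algebra \<Rightarrow> 'a \<Rightarrow> 'a"
  assumes "cond_alg imp"
  shows "(\<forall>a X. X \<subseteq> Ul \<longrightarrow> boxQ imp a X = Box imp (phi a) X) \<and>
    (\<forall>U V. U \<subseteq> Ul \<and> V \<subseteq> Ul \<longrightarrow>
           Box imp U V =
             (\<Inter>(Y, W)\<in>pairs U V. \<Union>a\<in>FY Y. \<Union>b\<in>IO W. Box imp (phi a) (phi b)) \<and>
           (\<Inter>(Y, W)\<in>pairs U V. \<Union>a\<in>FY Y. \<Union>b\<in>IO W. Box imp (phi a) (phi b)) =
             (\<Inter>(Y, W)\<in>pairs U V. \<Union>a\<in>FY Y. boxQ imp a W))"
proof (intro conjI allI impI)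
  fix a X show "boxQ imp a X = Box imp (phi a) X"
    by (rule boxQ_eq_Box_phi[OF assms])
next
  fix U V :: "'a set set" assume "U \<subseteq> Ul \<and> V \<subseteq> Ul"
  let ?R1 = "\<Inter>(Y, W)\<in>pairs U V. \<Union>a\<in>FY Y. \<Union>b\<in>IO W. Box imp (phi a) (phi b)"
  let ?R2 = "\<Inter>(Y, W)\<in>pairs U V. \<Union>a\<in>FY Y. boxQ imp a W"
  have Box_R1: "Box imp U V \<subseteq> ?R1" by (rule Box_subset_Inter_Box_phi[OF assms])
  have R1_R2: "?R1 \<subseteq> ?R2" by (rule Inter_Box_phi_subset_Inter_boxQ[OF assms])
  have R2_Box: "?R2 \<subseteq> Box imp U V"
    using \<open>U \<subseteq> Ul \<and> V \<subseteq> Ul\<close> by (simp add: Inter_boxQ_subset_Box)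
  show "Box imp U V = ?R1"
    by (rule subset_antisym[OF Box_R1 order_trans[OF R1_R2 R2_Box]])
  show "?R1 = ?R2"
    by (rule subset_antisym[OF R1_R2 order_trans[OF R2_Box Box_R1]])
qed

end
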